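(* Let $L$ be a real $n\times n$ matrix with nonpositive off-diagonal entries and nonnegative row sums (i.e. $\sum_{j}L_{ij}\ge 0$ for every $i$). If $f\in\mathbb{Z}^n$ with $f\ge 0$ is $\chi$-superstable with respect to $L$, then $f$ is $z$-superstable with respect to $L$.
   Context: Vector inequalities are entrywise. A vector $f\in\mathbb{Z}^n$ with $f\ge0$ is $\chi$-superstable with respect to $L$ if for every $\chi\in\{0,1\}^n$ with $\chi\ne 0$ there exists $i$ with $f_i-(L\chi)_i<0$. A vector $f\in\mathbb{Z}^n$ with $f\ge 0$ is $z$-superstable with respect to $L$ if for every $z\in\mathbb{Z}^n$ with $z\ge0$ and $z\ne0$ there exists $i$ with $f_i-(Lz)_i<0$. *)

theory Defs
  imports "HOL-Analysis.Analysis"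
begin

definition Lmul :: "real^'n^'n \<Rightarrow> int^'n \<Rightarrow> real^'n" where
  "Lmul L x = L *v (\<chi> i. real_of_int (x $ i))"

definition chi_superstable :: "real^'n^'n \<Rightarrow> int^'n \<Rightarrow> bool" where
  "chi_superstable L f \<longleftrightarrow> (\<forall>i. f $ i \<ge> 0) \<and>
     (\<forall>c::int^'n. (\<forall>i. c $ i \<in> {0,1}) \<and> c \<noteq> 0 \<longrightarrow>
        (\<exists>i. real_of_int (f $ i) - Lmul L c $ i < 0))"

definition z_superstable :: "real^'n^'n \<Rightarrow> int^'n \<Rightarrow> bool" where
  "z_superstable L f \<longleftrightarrow> (\<forall>i. f $ i \<ge> 0) \<and>
     (\<forall>z::int^'n. (\<forall>i. z $ i \<ge> 0) \<and> z \<noteq> 0 \<longrightarrow>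
        (\<exists>i. real_of_int (f $ i) - Lmul L z $ i < 0))"

end

theory Submission
  imports Defs
begin

(* Let L be a Z-matrix (nonpositive off-diagonal entries) with
   nonnegative row sums, and let z \<ge> 0, z \<noteq> 0 be an integer vector with
   maximum entry M \<ge> 1.  Let c be the 0/1 indicator of the entries where z
   attains M.  Chi-superstability applied to c yields a row i with f_i < (Lc)_i.
   Since f_i \<ge> 0, (Lc)_i > 0, and a Z-matrix row cannot be positive on a
   nonnegative vector vanishing at i, so c_i = 1, i.e. z_i = M.  Now z - c is
   bounded above by M - 1 = (z - c)_i \<ge> 0, so by the discrete maximum
   principle (L(z - c))_i \<ge> 0.  Hence (Lz)_i \<ge> (Lc)_i > f_i. *)

lemma Zmatrix_row_nonpos:
  fixes L :: "real^'n^'n" and x :: "real^'n"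
  assumes offdiag: "\<And>i j. i \<noteq> j \<Longrightarrow> L $ i $ j \<le> 0"
    and nonneg: "\<And>j. x $ j \<ge> 0" and zero: "x $ i = 0"
  shows "(L *v x) $ i \<le> 0"
  unfolding matrix_vector_mult_def vec_lambda_beta
proof (rule sum_nonpos)
  fix j
  show "L $ i $ j * x $ j \<le> 0"
    using zero offdiag[of i j] nonneg[of j]
    by (cases "j = i") (auto intro: mult_nonpos_nonneg)
qed

lemma Zmatrix_max_principle:
  fixes L :: "real^'n^'n" and x :: "real^'n"
  assumes offdiag: "\<And>i j. i \<noteq> j \<Longrightarrow> L $ i $ j \<le> 0"
    and rowsum: "(\<Sum>j\<in>UNIV. L $ i $ j) \<ge> 0"
    and max: "\<And>j. x $ j \<le> x $ i" and nonneg: "x $ i \<ge> 0"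
  shows "(L *v x) $ i \<ge> 0"
proof -
  have "0 \<le> (\<Sum>j\<in>UNIV. L $ i $ j) * x $ i"
    using rowsum nonneg by simp
  also have "\<dots> = (\<Sum>j\<in>UNIV. L $ i $ j * x $ i)"
    by (simp add: sum_distrib_right)
  also have "\<dots> \<le> (\<Sum>j\<in>UNIV. L $ i $ j * x $ j)"
  proof (rule sum_mono)
    fix j
    show "L $ i $ j * x $ i \<le> L $ i $ j * x $ j"
      using offdiag[of i j] max[of j] by (cases "j = i") (auto intro: mult_left_mono_neg)
  qed
  finally show ?thesis
    by (simp add: matrix_vector_mult_def)
qed

lemma Lmul_diff: "Lmul L (x - y) = Lmul L x - Lmul L y"
proof -
  have "(\<chi> i. real_of_int ((x - y) $ i)) =
        (\<chi> i. real_of_int (x $ i)) - (\<chi> i. real_of_int (y $ i))"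
    by (simp add: vec_eq_iff)
  then show ?thesis
    by (simp add: Lmul_def matrix_vector_mult_diff_distrib)
qed

lemma int_vec_max:
  fixes z :: "int^'n"
  assumes nonneg: "\<And>i. z $ i \<ge> 0" and nonzero: "z \<noteq> 0"
  obtains k where "\<And>j. z $ j \<le> z $ k" and "z $ k \<ge> 1"
proof -
  obtain k where k: "z $ k = Max (range (($) z))"
    by (metis (mono_tags) Max_in UNIV_not_empty finite finite_imageI image_iff image_is_empty)
  have max: "\<And>j. z $ j \<le> z $ k"
    unfolding k by simp
  obtain j where "z $ j \<noteq> 0"
    using nonzero by (auto simp: vec_eq_iff)
  with nonneg[of j] max[of j] have "z $ k \<ge> 1" by linarith
  with max show ?thesis using that by blast
qed

theorem mainTheorem4:
  fixes L :: "real^'n^'n" and f :: "int^'n"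
  assumes offdiag: "\<And>i j. i \<noteq> j \<Longrightarrow> L $ i $ j \<le> 0"
    and rowsum: "\<And>i. (\<Sum>j\<in>UNIV. L $ i $ j) \<ge> 0"
    and fnonneg: "\<And>i. f $ i \<ge> 0"
    and chi: "chi_superstable L f"
  shows "z_superstable L f"
  unfolding z_superstable_def
proof (intro conjI allI impI fnonneg)
  fix z :: "int^'n"
  assume "(\<forall>i. z $ i \<ge> 0) \<and> z \<noteq> 0"
  then obtain k where max: "\<And>j. z $ j \<le> z $ k" and pos: "z $ k \<ge> 1"
    using int_vec_max by blast
  define c :: "int^'n" where "c = (\<chi> j. if z $ j = z $ k then 1 else 0)"
  have "c $ k = 1" by (simp add: c_def)
  then have "(\<forall>j. c $ j \<in> {0,1}) \<and> c \<noteq> 0"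
    by (auto simp: c_def vec_eq_iff)
  with chi obtain i where i: "real_of_int (f $ i) < Lmul L c $ i"
    unfolding chi_superstable_def by force
  have zi: "z $ i = z $ k"
  proof (rule ccontr)
    assume "z $ i \<noteq> z $ k"
    then have "Lmul L c $ i \<le> 0"
      unfolding Lmul_def by (intro Zmatrix_row_nonpos offdiag) (auto simp: c_def)
    with i fnonneg[of i] show False by simp
  qed
  have "Lmul L (z - c) $ i \<ge> 0"
    unfolding Lmul_def
    by (rule Zmatrix_max_principle[OF offdiag rowsum])
       (use max zi pos in \<open>auto simp: c_def dest: order.not_eq_order_implies_strict\<close>)
  with i show "\<exists>i. real_of_int (f $ i) - Lmul L z $ i < 0"
    by (intro exI[of _ i]) (simp add: Lmul_diff)
qed

end
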